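(* Let $E$ be a real Hilbert space with $\dim(E)\ge2$, $h\in E$ a unit vector, and $f:\mathbb{R}_{\ge0}\to\mathbb{R}_{\ge0}$ with $f(d)=0$ iff $d=0$. Let $x\preceq_f y\iff f(\|y_\perp-x_\perp\|)\le y_h-x_h$, and assume $(E,\preceq_f)$ is a sponge. Then the following are equivalent: (1) the relation $\preceq_f$ is topologically closed in $E\times E$; (2) $f$ is lower semicontinuous; (3) $f$ is ascending (non-decreasing); (4) $f$ is increasing (strictly increasing); (5) $f$ is superadditive. If $\dim(E)\ge3$, all of these properties hold.
   Context: For $x\in E$ write $x=x_h h+x_\perp$ with $x_h=(x,h)$ and $x_\perp$ orthogonal to $h$. An oriented set $(S,\preceq)$ (with $\preceq$ reflexive and antisymmetric) is a sponge if every finite, nonempty, right-bounded subset has a join and every finite, nonempty, left-bounded subset has a meet. Here $P$ is right-bounded if some $s$ has $p\preceq s$ for all $p\in P$; the join of $P$ is an $x$ with $p\preceq x$ for all $p\in P$ and $x\preceq y$ whenever $p\preceq y$ for all $p\in P$; left-bounded and meet are dual. $f$ is superadditive if $f(x+y)\ge f(x)+f(y)$ for all $x,y\ge0$. *)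

theory Defs
  imports "HOL-Analysis.Analysis"
begin

definition is_join :: "('a \<Rightarrow> 'a \<Rightarrow> bool) \<Rightarrow> 'a set \<Rightarrow> 'a \<Rightarrow> bool" where
  "is_join le P x \<longleftrightarrow> (\<forall>p\<in>P. le p x) \<and> (\<forall>y. (\<forall>p\<in>P. le p y) \<longrightarrow> le x y)"

definition is_meet :: "('a \<Rightarrow> 'a \<Rightarrow> bool) \<Rightarrow> 'a set \<Rightarrow> 'a \<Rightarrow> bool" where
  "is_meet le P x \<longleftrightarrow> (\<forall>p\<in>P. le x p) \<and> (\<forall>y. (\<forall>p\<in>P. le y p) \<longrightarrow> le y x)"

definition sponge :: "('a \<Rightarrow> 'a \<Rightarrow> bool) \<Rightarrow> bool" where
  "sponge le \<longleftrightarrow>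
     (\<forall>x. le x x) \<and> (\<forall>x y. le x y \<and> le y x \<longrightarrow> x = y) \<and>
     (\<forall>P. finite P \<and> P \<noteq> {} \<and> (\<exists>s. \<forall>p\<in>P. le p s) \<longrightarrow> (\<exists>x. is_join le P x)) \<and>
     (\<forall>P. finite P \<and> P \<noteq> {} \<and> (\<exists>s. \<forall>p\<in>P. le s p) \<longrightarrow> (\<exists>x. is_meet le P x))"

text \<open>x = x_h h + x_perp with x_h = (x,h).\<close>
definition hcomp :: "'a::real_inner \<Rightarrow> 'a \<Rightarrow> real" where
  "hcomp h x = inner x h"

definition perp :: "'a::real_inner \<Rightarrow> 'a \<Rightarrow> 'a" where
  "perp h x = x - inner x h *\<^sub>R h"

definition cone_rel :: "(real \<Rightarrow> real) \<Rightarrow> 'a::real_inner \<Rightarrow> 'a \<Rightarrow> 'a \<Rightarrow> bool" where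
  "cone_rel f h x y \<longleftrightarrow> f (norm (perp h y - perp h x)) \<le> hcomp h y - hcomp h x"

definition lsc_on :: "real set \<Rightarrow> (real \<Rightarrow> real) \<Rightarrow> bool" where
  "lsc_on S f \<longleftrightarrow> (\<forall>x\<in>S. \<forall>c. c < f x \<longrightarrow> (\<forall>\<^sub>F y in at x within S. c < f y))"

definition superadditive_on :: "real set \<Rightarrow> (real \<Rightarrow> real) \<Rightarrow> bool" where
  "superadditive_on S f \<longleftrightarrow> (\<forall>x\<in>S. \<forall>y\<in>S. f (x + y) \<ge> f x + f y)"

text \<open>dim(E) \<ge> n, valid also for infinite-dimensional spaces.\<close>
definition dim_at_least :: "nat \<Rightarrow> 'a::real_vector itself \<Rightarrow> bool" where
  "dim_at_least n _ \<longleftrightarrow> (\<exists>S::'a set. finite S \<and> card S = n \<and> independent S)"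

end

theory Submission
  imports Defs
begin

(*
  Everything is read off joins of two points. For p orthogonal to h, the join of p and -p is
  invariant under the reflection in the h-axis, so it is t h with t >= f |p|; comparing it with
  the upper bounds M h + q of {p, -p} gives, for p, q orthogonal to h,
      f |p| + f |q| <= max (f |q - p|) (f |q + p|).
  On a line orthogonal to h this makes a monotone f superadditive, hence strictly increasing; with
  two orthogonal directions (dim E >= 3) it gives f r + f u <= f (sqrt (r^2 + u^2)), so f is
  monotone outright. The relation is closed iff the epigraph of f is, i.e. iff f is lower
  semicontinuous. If f is lower semicontinuous, the orthogonal part of the join of 0 and
  tau h + b e moves continuously with tau, from 0 at tau = -f b to b e at tau = f b; where its
  norm is a < b, the join lies below f b h + b e, which forces f a <= f b. Conversely, a monotone
  f has no jump at x: for tau inside the jump, the join of 0 and tau h + x e would have height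
  at least f x and at most tau.
*)

lemma dim_at_least_kernel_nonzero:
  fixes L :: "'a::real_vector \<Rightarrow> 'b::euclidean_space"
  assumes "dim_at_least n TYPE('a)" and "linear L" and "DIM('b) < n"
  shows "\<exists>v. v \<noteq> 0 \<and> L v = 0"
proof (rule ccontr)
  obtain S :: "'a set" where S: "finite S" "card S = n" "independent S"
    using assms(1) unfolding dim_at_least_def by blast
  assume "\<not> ?thesis"
  then have "inj L"
    using \<open>linear L\<close> linear_injective_0 by blast
  then have "independent (L ` S)" "card (L ` S) = card S"
    using linear_independent_injective_image[OF \<open>linear L\<close> S(3)] card_image
      inj_on_subset[OF \<open>inj L\<close> subset_UNIV] by auto
  then show False
    using independent_bound[of "L ` S"] S(2) assms(3) by simp
qed

lemma exists_unit_orthogonal: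
  fixes h :: "'a::real_inner"
  assumes "dim_at_least 2 TYPE('a)"
  shows "\<exists>e. norm e = 1 \<and> inner e h = 0"
proof -
  have "linear (\<lambda>v. inner v h)"
    by (rule linearI) (auto simp: inner_add_left)
  then obtain v where "v \<noteq> 0" "inner v h = 0"
    using dim_at_least_kernel_nonzero[OF assms] by fastforce
  then show ?thesis
    by (intro exI[of _ "v /\<^sub>R norm v"]) auto
qed

lemma exists_orthonormal_pair_orthogonal:
  fixes h :: "'a::real_inner"
  assumes "dim_at_least 3 TYPE('a)"
  shows "\<exists>e1 e2. norm e1 = 1 \<and> norm e2 = 1 \<and> inner e1 h = 0 \<and> inner e2 h = 0 \<and> inner e1 e2 = 0"
proof -
  have "linear (\<lambda>v. inner v h)"
    by (rule linearI) (auto simp: inner_add_left)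
  then obtain v where v: "v \<noteq> 0" "inner v h = 0"
    using dim_at_least_kernel_nonzero[OF assms] by fastforce
  have "linear (\<lambda>w. (inner w h, inner w v))"
    by (rule linearI) (auto simp: inner_add_left)
  then obtain w where w: "w \<noteq> 0" "inner w h = 0" "inner w v = 0"
    using dim_at_least_kernel_nonzero[OF assms] by (fastforce simp: zero_prod_def)
  show ?thesis
    by (intro exI[of _ "v /\<^sub>R norm v"] exI[of _ "w /\<^sub>R norm w"]) (use v w in \<open>auto simp: inner_commute\<close>)
qed

lemma lsc_on_iff_closed_epigraph:
  fixes f :: "real \<Rightarrow> real"
  assumes "closed S"
  shows "lsc_on S f \<longleftrightarrow> closed {(d, t). d \<in> S \<and> f d \<le> t}"
proof
  assume lsc: "lsc_on S f"
  show "closed {(d, t). d \<in> S \<and> f d \<le> t}"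
    unfolding closed_def
  proof (rule open_prod_intro)
    fix p assume "p \<in> - {(d, t). d \<in> S \<and> f d \<le> t}"
    then obtain d t where p: "p = (d, t)" and out: "d \<notin> S \<or> t < f d"
      by force
    show "\<exists>A B. open A \<and> open B \<and> p \<in> A \<times> B \<and> A \<times> B \<subseteq> - {(d, t). d \<in> S \<and> f d \<le> t}"
    proof (cases "d \<in> S")
      case False
      then show ?thesis
        using assms p by (intro exI[of _ "- S"] exI[of _ UNIV]) auto
    next
      case True
      define c where "c = (t + f d) / 2"
      have "t < c" "c < f d"
        using out True unfolding c_def by auto
      then obtain A where "open A" "d \<in> A" and A: "\<forall>y\<in>A. y \<noteq> d \<longrightarrow> y \<in> S \<longrightarrow> c < f y"
        using lsc True unfolding lsc_on_def eventually_at_topological by blast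
      then show ?thesis
        using p \<open>t < c\<close> \<open>c < f d\<close> by (intro exI[of _ A] exI[of _ "{..<c}"]) force
    qed
  qed
next
  assume "closed {(d, t). d \<in> S \<and> f d \<le> t}"
  then have "open (- {(d, t). d \<in> S \<and> f d \<le> t})"
    by (simp add: open_Compl)
  show "lsc_on S f"
    unfolding lsc_on_def eventually_at_topological
  proof (intro ballI allI impI)
    fix x c assume "x \<in> S" "c < f x"
    then obtain A B where "open A" "open B" "(x, c) \<in> A \<times> B"
        and "A \<times> B \<subseteq> - {(d, t). d \<in> S \<and> f d \<le> t}"
      using open_prod_elim[OF \<open>open (- _)\<close>, of "(x, c)"] by auto
    then show "\<exists>A. open A \<and> x \<in> A \<and> (\<forall>y\<in>A. y \<noteq> x \<longrightarrow> y \<in> S \<longrightarrow> c < f y)"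
      by (intro exI[of _ A]) force
  qed
qed

lemma lsc_on_positive_bounded_below_on_compact:
  fixes f :: "real \<Rightarrow> real"
  assumes lsc: "lsc_on S f" and "compact K" "K \<subseteq> S" and pos: "\<And>x. x \<in> K \<Longrightarrow> 0 < f x"
  shows "\<exists>\<mu>>0. \<forall>x\<in>K. \<mu> \<le> f x"
proof -
  have nbhd: "\<forall>x\<in>K. \<exists>A. open A \<and> x \<in> A \<and> (\<forall>y\<in>A \<inter> S. f x / 2 < f y)"
  proof
    fix x assume "x \<in> K"
    have "f x / 2 < f x"
      using pos[OF \<open>x \<in> K\<close>] by simp
    then obtain A where "open A" "x \<in> A" "\<forall>y\<in>A. y \<noteq> x \<longrightarrow> y \<in> S \<longrightarrow> f x / 2 < f y"
      using lsc \<open>x \<in> K\<close> \<open>K \<subseteq> S\<close> unfolding lsc_on_def eventually_at_topological by blast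
    then show "\<exists>A. open A \<and> x \<in> A \<and> (\<forall>y\<in>A \<inter> S. f x / 2 < f y)"
      using \<open>f x / 2 < f x\<close> by (intro exI[of _ A]) auto
  qed
  obtain A where A: "\<forall>x\<in>K. open (A x) \<and> x \<in> A x \<and> (\<forall>y\<in>A x \<inter> S. f x / 2 < f y)"
    using bchoice[OF nbhd] by blast
  obtain C where C: "C \<subseteq> K" "finite C" "K \<subseteq> (\<Union>x\<in>C. A x)"
    by (rule compactE_image[OF \<open>compact K\<close>, of K A]) (use A in auto)
  define \<mu> where "\<mu> = Min (insert 1 ((\<lambda>x. f x / 2) ` C))"
  have "0 < \<mu>"
    unfolding \<mu>_def using C pos by (subst Min_gr_iff) auto
  moreover have "\<mu> \<le> f y" if "y \<in> K" for y
  proof -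
    obtain x where "x \<in> C" "y \<in> A x"
      using C(3) \<open>y \<in> K\<close> by blast
    then have "f x / 2 < f y"
      using A C(1) \<open>y \<in> K\<close> \<open>K \<subseteq> S\<close> by blast
    moreover have "\<mu> \<le> f x / 2"
      unfolding \<mu>_def using C(2) \<open>x \<in> C\<close> by (intro Min_le) auto
    ultimately show ?thesis
      by linarith
  qed
  ultimately show ?thesis
    by blast
qed

lemma lower_bound_propagates_by_doubling:
  fixes f :: "real \<Rightarrow> real"
  assumes double: "\<And>r. 0 \<le> r \<Longrightarrow> 2 * f r \<le> f (2 * r)"
    and nonneg: "\<And>r. 0 \<le> r \<Longrightarrow> 0 \<le> f r"
    and "0 < \<delta>" and bound: "\<And>x. \<delta> \<le> x \<Longrightarrow> x \<le> 2 * \<delta> \<Longrightarrow> \<mu> \<le> f x"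
    and "\<delta> \<le> x"
  shows "\<mu> \<le> f x"
proof -
  have "\<forall>x. \<delta> \<le> x \<and> x \<le> 2 ^ n * \<delta> \<longrightarrow> \<mu> \<le> f x" for n
  proof (induction n)
    case 0
    then show ?case
      using bound \<open>0 < \<delta>\<close> by auto
  next
    case (Suc n)
    show ?case
    proof (intro allI impI)
      fix x assume x: "\<delta> \<le> x \<and> x \<le> 2 ^ Suc n * \<delta>"
      show "\<mu> \<le> f x"
      proof (cases "x \<le> 2 * \<delta>")
        case True
        then show ?thesis
          using bound x by blast
      next
        case False
        then have "\<mu> \<le> f (x / 2)"
          using Suc.IH x by auto
        moreover have "2 * f (x / 2) \<le> f x" "0 \<le> f (x / 2)"
          using double[of "x / 2"] nonneg[of "x / 2"] x \<open>0 < \<delta>\<close> by auto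
        ultimately show ?thesis
          by linarith
      qed
    qed
  qed
  moreover obtain n where "x / \<delta> < 2 ^ n"
    using real_arch_pow[of 2 "x / \<delta>"] by auto
  then have "x \<le> 2 ^ n * \<delta>"
    using \<open>0 < \<delta>\<close> by (simp add: divide_less_eq)
  ultimately show ?thesis
    using \<open>\<delta> \<le> x\<close> by blast
qed

lemma uniformly_continuous_on_by_inverse_modulus:
  fixes g :: "real \<Rightarrow> 'a::metric_space" and f :: "real \<Rightarrow> real"
  assumes away: "\<And>\<epsilon>. 0 < \<epsilon> \<Longrightarrow> \<exists>\<mu>>0. \<forall>d\<ge>\<epsilon>. \<mu> \<le> f d"
    and modulus: "\<And>s t. s \<in> S \<Longrightarrow> t \<in> S \<Longrightarrow> f (dist (g s) (g t)) \<le> \<bar>s - t\<bar>"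
  shows "uniformly_continuous_on S g"
  unfolding uniformly_continuous_on_def
proof (intro allI impI)
  fix \<epsilon> :: real assume "0 < \<epsilon>"
  then obtain \<mu> where "0 < \<mu>" and \<mu>: "\<And>d. \<epsilon> \<le> d \<Longrightarrow> \<mu> \<le> f d"
    using away by blast
  have "dist (g s) (g t) < \<epsilon>" if "s \<in> S" "t \<in> S" "dist s t < \<mu>" for s t
  proof (rule ccontr)
    assume "\<not> ?thesis"
    then have "\<mu> \<le> f (dist (g s) (g t))"
      using \<mu> by simp
    also have "\<dots> \<le> \<bar>s - t\<bar>"
      using modulus that by blast
    finally show False
      using \<open>dist s t < \<mu>\<close> by (simp add: dist_real_def)
  qed
  then show "\<exists>\<delta>>0. \<forall>s\<in>S. \<forall>t\<in>S. dist t s < \<delta> \<longrightarrow> dist (g t) (g s) < \<epsilon>"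
    using \<open>0 < \<mu>\<close> by blast
qed

lemma superadditive_on_imp_strict_mono_on:
  fixes f :: "real \<Rightarrow> real"
  assumes sa: "superadditive_on {0..} f" and pos: "\<And>d. 0 < d \<Longrightarrow> 0 < f d"
  shows "strict_mono_on {0..} f"
proof (rule strict_mono_onI)
  fix x y :: real assume "x \<in> {0..}" "y \<in> {0..}" "x < y"
  then have "f x + f (y - x) \<le> f (x + (y - x))"
    using sa[unfolded superadditive_on_def, rule_format, of x "y - x"] by simp
  moreover have "0 < f (y - x)"
    using pos \<open>x < y\<close> by simp
  ultimately show "f x < f y"
    by simp
qed

lemma superadditive_on_mult:
  fixes f :: "real \<Rightarrow> real"
  assumes sa: "superadditive_on {0..} f" and "0 \<le> x" and "0 < n"
  shows "real n * f x \<le> f (real n * x)"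
  using \<open>0 < n\<close>
proof (induction n rule: nat_induct_non_zero)
  case 1
  then show ?case
    by simp
next
  case (Suc n)
  have "f (real n * x) + f x \<le> f (real n * x + x)"
    using sa[unfolded superadditive_on_def, rule_format, of "real n * x" x] \<open>0 \<le> x\<close> by simp
  then show ?case
    using Suc.IH by (simp add: algebra_simps)
qed

lemma superadditive_on_small_values:
  fixes f :: "real \<Rightarrow> real"
  assumes sa: "superadditive_on {0..} f" and "0 < d" "0 < \<eta>"
  shows "\<exists>u. 0 < u \<and> u < d \<and> f u < \<eta>"
proof -
  obtain m :: nat where "f d / \<eta> < real m"
    using reals_Archimedean2 by blast
  define n where "n = m + 2"
  have "1 < n" "f d < real n * \<eta>"
    using \<open>f d / \<eta> < real m\<close> \<open>0 < \<eta>\<close> unfolding n_def by (auto simp: divide_less_eq algebra_simps)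
  moreover have "real n * f (d / real n) \<le> f d"
    using superadditive_on_mult[OF sa, of "d / real n" n] \<open>0 < d\<close> \<open>1 < n\<close> by simp
  ultimately have "real n * f (d / real n) < real n * \<eta>"
    by linarith
  then have "f (d / real n) < \<eta>"
    using \<open>1 < n\<close> by simp
  moreover have "0 < d / real n" "d / real n < d"
    using \<open>0 < d\<close> \<open>1 < n\<close> by (auto simp: divide_less_eq)
  ultimately show ?thesis
    by blast
qed

lemma strict_mono_on_eq_0_if_below_all_small:
  fixes f :: "real \<Rightarrow> real"
  assumes "strict_mono_on {0..} f" "0 \<le> v" "0 < x" and le: "\<And>q. 0 < q \<Longrightarrow> q < x \<Longrightarrow> f v \<le> f q"
  shows "v = 0"
proof (rule ccontr)
  assume "v \<noteq> 0"
  define q where "q = min v x / 2"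
  have "0 < q" "q < v" "q < x"
    using \<open>v \<noteq> 0\<close> assms(2,3) unfolding q_def by auto
  then have "f q < f v"
    using strict_mono_onD[OF assms(1), of q v] by simp
  then show False
    using le[OF \<open>0 < q\<close> \<open>q < x\<close>] by simp
qed

lemma mono_on_left_closed_imp_lsc_on:
  fixes f :: "real \<Rightarrow> real"
  assumes mono: "mono_on {0..} f"
    and left: "\<And>x \<tau>. 0 < x \<Longrightarrow> (\<And>y. 0 \<le> y \<Longrightarrow> y < x \<Longrightarrow> f y \<le> \<tau>) \<Longrightarrow> f x \<le> \<tau>"
  shows "lsc_on {0..} f"
  unfolding lsc_on_def eventually_at_topological
proof (intro ballI allI impI)
  fix x c assume "x \<in> {0..}" "c < f x"
  obtain y where "y < x" "\<And>z. 0 \<le> z \<Longrightarrow> y < z \<Longrightarrow> c < f z"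
  proof (cases "x = 0")
    case True
    have "c < f z" if "0 \<le> z" for z
      using mono_onD[OF mono, of 0 z] that \<open>c < f x\<close> True by simp
    then show thesis
      using that[of "-1"] True by simp
  next
    case False
    then obtain y where "0 \<le> y" "y < x" "c < f y"
      using left[of x c] \<open>x \<in> {0..}\<close> \<open>c < f x\<close> by (meson atLeast_iff not_le order.order_iff_strict)
    have "c < f z" if "y < z" for z
      using mono_onD[OF mono, of y z] that \<open>0 \<le> y\<close> \<open>c < f y\<close> by simp
    then show thesis
      using that[of y] \<open>y < x\<close> by simp
  qed
  then show "\<exists>A. open A \<and> x \<in> A \<and> (\<forall>z\<in>A. z \<noteq> x \<longrightarrow> z \<in> {0..} \<longrightarrow> c < f z)"
    by (intro exI[of _ "{y<..}"]) auto
qed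

lemma is_join_pair_iff:
  "is_join le {x, y} z \<longleftrightarrow> le x z \<and> le y z \<and> (\<forall>w. le x w \<longrightarrow> le y w \<longrightarrow> le z w)"
  unfolding is_join_def by auto

lemma hcomp_add [simp]: "hcomp h (x + y) = hcomp h x + hcomp h y"
  by (simp add: hcomp_def inner_add_left)

lemma hcomp_diff [simp]: "hcomp h (x - y) = hcomp h x - hcomp h y"
  by (simp add: hcomp_def inner_diff_left)

lemma perp_add [simp]: "perp h (x + y) = perp h x + perp h y"
  by (simp add: perp_def inner_add_left algebra_simps)

lemma perp_diff [simp]: "perp h (x - y) = perp h x - perp h y"
  by (simp add: perp_def inner_diff_left algebra_simps)

locale unit_vector =
  fixes h :: "'a::real_inner"
  assumes unit: "norm h = 1"
begin

lemma inner_h_h [simp]: "inner h h = 1"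
  using unit by (simp add: norm_eq_1)

lemma hcomp_scaleR_h [simp]: "hcomp h (t *\<^sub>R h) = t"
  by (simp add: hcomp_def)

lemma perp_scaleR_h [simp]: "perp h (t *\<^sub>R h) = 0"
  by (simp add: perp_def)

lemma hcomp_orthogonal [simp]: "inner p h = 0 \<Longrightarrow> hcomp h p = 0"
  by (simp add: hcomp_def)

lemma perp_orthogonal [simp]: "inner p h = 0 \<Longrightarrow> perp h p = p"
  by (simp add: perp_def)

lemma inner_perp [simp]: "inner (perp h x) h = 0"
  by (simp add: perp_def inner_diff_left)

lemma closed_cone_rel_iff_closed_epigraph:
  assumes "norm e = 1" "inner e h = 0"
  shows "closed {(x, y). cone_rel f h x y} \<longleftrightarrow> closed {(d, t). d \<in> {0..} \<and> f d \<le> t}"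
    (is "closed ?R \<longleftrightarrow> closed ?E")
proof
  assume "closed ?R"
  have "?E = ({0..} \<times> UNIV) \<inter> (\<lambda>p. (0, snd p *\<^sub>R h + fst p *\<^sub>R e)) -` ?R"
    using assms by (auto simp: cone_rel_def)
  moreover have "closed ((\<lambda>p. (0, snd p *\<^sub>R h + fst p *\<^sub>R e)) -` ?R)"
    by (intro continuous_closed_vimage \<open>closed ?R\<close>) (intro continuous_intros)
  ultimately show "closed ?E"
    by (simp add: closed_Int closed_Times)
next
  assume "closed ?E"
  have "?R = (\<lambda>p. (norm (perp h (snd p) - perp h (fst p)), hcomp h (snd p) - hcomp h (fst p))) -` ?E"
    by (auto simp: cone_rel_def)
  moreover have "closed \<dots>"
    unfolding perp_def hcomp_def by (intro continuous_closed_vimage \<open>closed ?E\<close> continuous_intros)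
  ultimately show "closed ?R"
    by simp
qed

end

locale cone_sponge = unit_vector h for h :: "'a::real_inner" +
  fixes f :: "real \<Rightarrow> real"
  assumes f_nonneg: "\<forall>d\<ge>0. f d \<ge> 0"
    and f_zero: "\<forall>d\<ge>0. f d = 0 \<longleftrightarrow> d = 0"
    and sponge: "sponge (cone_rel f h)"
begin

abbreviation cone_le :: "'a \<Rightarrow> 'a \<Rightarrow> bool" (infix "\<preceq>" 50)
  where "x \<preceq> y \<equiv> cone_rel f h x y"

lemma f_0 [simp]: "f 0 = 0"
  using f_zero by simp

lemma f_nonneg_norm [simp]: "0 \<le> f (norm x)"
  using f_nonneg by simp

lemma f_pos: "0 < d \<Longrightarrow> 0 < f d"
  using f_nonneg[rule_format, of d] f_zero[rule_format, of d] by auto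

lemma cone_le_refl: "x \<preceq> x"
  using sponge[unfolded sponge_def, THEN conjunct1] by blast

lemma cone_le_antisym: "x \<preceq> y \<Longrightarrow> y \<preceq> x \<Longrightarrow> x = y"
  using sponge[unfolded sponge_def, THEN conjunct2, THEN conjunct1] by blast

lemma cone_le_raise: "x \<preceq> y \<Longrightarrow> 0 \<le> s \<Longrightarrow> x \<preceq> y + s *\<^sub>R h"
  by (simp add: cone_rel_def)

lemma cone_le_translate: "x + v \<preceq> y + v \<longleftrightarrow> x \<preceq> y"
  by (simp add: cone_rel_def)

lemma join_exists: "finite P \<Longrightarrow> P \<noteq> {} \<Longrightarrow> \<forall>p\<in>P. p \<preceq> s \<Longrightarrow> \<exists>z. is_join (\<preceq>) P z"
  using sponge[unfolded sponge_def, THEN conjunct2, THEN conjunct2, THEN conjunct1] by blast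

lemma exists_join_pair: "\<exists>z. is_join (\<preceq>) {x, y} z"
proof -
  define w where "w = max (hcomp h y) (hcomp h x + f (norm (perp h y - perp h x))) *\<^sub>R h + perp h y"
  have "x \<preceq> w" "y \<preceq> w"
    unfolding w_def by (auto simp: cone_rel_def)
  then show ?thesis
    using join_exists[of "{x, y}" w] by simp
qed

lemma join_pair_eq_right:
  assumes "x \<preceq> y" and "is_join (\<preceq>) {x, y} z"
  shows "z = y"
proof -
  have "z \<preceq> y" "y \<preceq> z"
    using assms cone_le_refl unfolding is_join_pair_iff by auto
  then show ?thesis
    by (rule cone_le_antisym)
qed

lemma f_add_le_max:
  assumes p: "inner p h = 0" and q: "inner q h = 0"
  shows "f (norm p) + f (norm q) \<le> max (f (norm (q - p))) (f (norm (q + p)))"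
proof -
  obtain z where z: "is_join (\<preceq>) {p, - p} z"
    using exists_join_pair by blast
  have "perp h z = 0"
  proof -
    \<comment> \<open>the reflection of z in the h-axis is again an upper bound of {p, -p}\<close>
    have "p \<preceq> hcomp h z *\<^sub>R h - perp h z" "- p \<preceq> hcomp h z *\<^sub>R h - perp h z"
      using z p unfolding is_join_pair_iff
      by (auto simp: cone_rel_def norm_minus_commute add.commute)
    then have "z \<preceq> hcomp h z *\<^sub>R h - perp h z"
      using z unfolding is_join_pair_iff by blast
    then have "f (norm (perp h z + perp h z)) \<le> 0"
      by (simp add: cone_rel_def norm_minus_commute)
    then have "norm (perp h z + perp h z) = 0"
      using f_zero f_nonneg_norm by (metis antisym norm_ge_zero)
    then show ?thesis
      by (simp flip: scaleR_2)
  qed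
  then have "f (norm p) \<le> hcomp h z"
    using z p unfolding is_join_pair_iff by (simp add: cone_rel_def)
  moreover
  define M where "M = max (f (norm (q - p))) (f (norm (q + p)))"
  have "p \<preceq> M *\<^sub>R h + q" "- p \<preceq> M *\<^sub>R h + q"
    using p q unfolding M_def by (auto simp: cone_rel_def)
  then have "z \<preceq> M *\<^sub>R h + q"
    using z unfolding is_join_pair_iff by blast
  then have "f (norm q) \<le> M - hcomp h z"
    using q \<open>perp h z = 0\<close> by (simp add: cone_rel_def)
  ultimately show ?thesis
    unfolding M_def by linarith
qed

lemma join_pair_raise_perp:
  assumes z: "is_join (\<preceq>) {x, y} z" and z': "is_join (\<preceq>) {x, y + s *\<^sub>R h} z'" and "0 \<le> s"
  shows "f (norm (perp h z' - perp h z)) \<le> s"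
proof -
  have "y \<preceq> z'"
    using z' \<open>0 \<le> s\<close> unfolding is_join_pair_iff by (simp add: cone_rel_def)
  then have "z \<preceq> z'"
    using z z' unfolding is_join_pair_iff by blast
  moreover have "x \<preceq> z + s *\<^sub>R h" "y + s *\<^sub>R h \<preceq> z + s *\<^sub>R h"
    using z \<open>0 \<le> s\<close> cone_le_raise cone_le_translate unfolding is_join_pair_iff by auto
  then have "z' \<preceq> z + s *\<^sub>R h"
    using z' unfolding is_join_pair_iff by blast
  ultimately have "2 * f (norm (perp h z' - perp h z)) \<le> s"
    by (simp add: cone_rel_def norm_minus_commute)
  then show ?thesis
    using f_nonneg_norm[of "perp h z' - perp h z"] by linarith
qed

lemma mono_if_orthonormal_pair:
  assumes "norm e1 = 1" "norm e2 = 1" "inner e1 h = 0" "inner e2 h = 0" "inner e1 e2 = 0"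
  shows "mono_on {0..} f"
proof (rule mono_onI)
  fix x y :: real assume "x \<in> {0..}" "y \<in> {0..}" "x \<le> y"
  define u where "u = sqrt (y\<^sup>2 - x\<^sup>2)"
  have "0 \<le> x" "0 \<le> u" "x\<^sup>2 + u\<^sup>2 = y\<^sup>2"
    using \<open>x \<in> {0..}\<close> \<open>x \<le> y\<close> power_mono[OF \<open>x \<le> y\<close>] unfolding u_def by auto
  have "(norm (u *\<^sub>R e2 + c *\<^sub>R e1))\<^sup>2 = y\<^sup>2" if "\<bar>c\<bar> = x" for c
    using assms \<open>x\<^sup>2 + u\<^sup>2 = y\<^sup>2\<close> that
    by (subst norm_add_Pythagorean) (auto simp: orthogonal_def inner_commute power_mult_distrib)
  then have norm_eq: "norm (u *\<^sub>R e2 + c *\<^sub>R e1) = y" if "\<bar>c\<bar> = x" for c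
    using that \<open>y \<in> {0..}\<close> by (metis atLeast_iff norm_ge_zero power2_eq_iff_nonneg)
  have "norm (u *\<^sub>R e2 - x *\<^sub>R e1) = y" "norm (u *\<^sub>R e2 + x *\<^sub>R e1) = y"
    using norm_eq[of "- x"] norm_eq[of x] \<open>0 \<le> x\<close> by simp_all
  then have "f x + f u \<le> f y"
    using f_add_le_max[of "x *\<^sub>R e1" "u *\<^sub>R e2"] assms \<open>0 \<le> x\<close> \<open>0 \<le> u\<close> by simp
  then show "f x \<le> f y"
    using f_nonneg \<open>0 \<le> u\<close> by force
qed

end

locale cone_sponge_plane = cone_sponge h f for h :: "'a::real_inner" and f +
  fixes e :: 'a
  assumes e_unit [simp]: "norm e = 1" and e_orth [simp]: "inner e h = 0"
begin

lemma norm_scaleR_e_diff [simp]: "norm (a *\<^sub>R e - b *\<^sub>R e) = \<bar>a - b\<bar>"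
  by (metis e_unit mult.right_neutral norm_scaleR scaleR_diff_left)

lemma f_add_le_max_line:
  assumes "0 \<le> r" "0 \<le> l"
  shows "f r + f l \<le> max (f \<bar>l - r\<bar>) (f (l + r))"
proof -
  have "norm (l *\<^sub>R e + r *\<^sub>R e) = l + r"
    using assms by (metis abs_of_nonneg add_nonneg_nonneg e_unit mult.right_neutral norm_scaleR scaleR_add_left)
  then show ?thesis
    using f_add_le_max[of "r *\<^sub>R e" "l *\<^sub>R e"] assms by simp
qed

lemma f_double:
  assumes "0 \<le> r"
  shows "2 * f r \<le> f (2 * r)"
proof -
  have "0 \<le> f (2 * r)"
    using f_nonneg assms by simp
  then show ?thesis
    using f_add_le_max_line[of r r] assms by (simp add: max_def)
qed

lemma mono_imp_superadditive:
  assumes mono: "mono_on {0..} f"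
  shows "superadditive_on {0..} f"
  unfolding superadditive_on_def
proof (intro ballI)
  fix x y :: real assume "x \<in> {0..}" "y \<in> {0..}"
  then have "f \<bar>y - x\<bar> \<le> f (y + x)"
    by (intro mono_onD[OF mono]) auto
  then show "f x + f y \<le> f (x + y)"
    using f_add_le_max_line[of x y] \<open>x \<in> {0..}\<close> \<open>y \<in> {0..}\<close> by (simp add: add.commute)
qed

lemma mono_imp_strict_mono: "mono_on {0..} f \<Longrightarrow> strict_mono_on {0..} f"
  using superadditive_on_imp_strict_mono_on mono_imp_superadditive f_pos by blast

lemma lsc_imp_bounded_away_from_zero:
  assumes lsc: "lsc_on {0..} f" and "0 < \<epsilon>"
  shows "\<exists>\<mu>>0. \<forall>d\<ge>\<epsilon>. \<mu> \<le> f d"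
proof -
  obtain \<mu> where "0 < \<mu>" and \<mu>: "\<forall>d\<in>{\<epsilon>..2 * \<epsilon>}. \<mu> \<le> f d"
    using lsc_on_positive_bounded_below_on_compact[OF lsc, of "{\<epsilon>..2 * \<epsilon>}"] \<open>0 < \<epsilon>\<close> f_pos by auto
  have "\<mu> \<le> f d" if "\<epsilon> \<le> d" for d
    using lower_bound_propagates_by_doubling[where f = f, OF f_double f_nonneg[rule_format] \<open>0 < \<epsilon>\<close> _ that] \<mu>
    by auto
  then show ?thesis
    using \<open>0 < \<mu>\<close> by blast
qed

lemma mono_imp_left_closed:
  assumes mono: "mono_on {0..} f" and "0 < x" and below: "\<And>y. 0 \<le> y \<Longrightarrow> y < x \<Longrightarrow> f y \<le> \<tau>"
  shows "f x \<le> \<tau>"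
proof -
  obtain z where z: "is_join (\<preceq>) {0, \<tau> *\<^sub>R h + x *\<^sub>R e} z"
    using exists_join_pair by blast
  have upper: "f (norm ((x - q) *\<^sub>R e - perp h z)) \<le> \<tau> + f q - hcomp h z" if "0 < q" "q < x" for q
  proof -
    have "0 \<preceq> (\<tau> + f q) *\<^sub>R h + (x - q) *\<^sub>R e"
      using below[of "x - q"] f_nonneg[rule_format, of q] that by (simp add: cone_rel_def)
    moreover have "\<tau> *\<^sub>R h + x *\<^sub>R e \<preceq> (\<tau> + f q) *\<^sub>R h + (x - q) *\<^sub>R e"
      using that by (simp add: cone_rel_def)
    ultimately have "z \<preceq> (\<tau> + f q) *\<^sub>R h + (x - q) *\<^sub>R e"
      using z unfolding is_join_pair_iff by blast
    then show ?thesis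
      by (simp add: cone_rel_def)
  qed
  have "f (norm (perp h z - x *\<^sub>R e)) \<le> hcomp h z - \<tau>"
    using z unfolding is_join_pair_iff by (simp add: cone_rel_def)
  then have "f (norm (perp h z - x *\<^sub>R e)) \<le> f q" if "0 < q" "q < x" for q
    using upper[OF that] f_nonneg_norm[of "(x - q) *\<^sub>R e - perp h z"] by linarith
  then have "norm (perp h z - x *\<^sub>R e) = 0"
    by (intro strict_mono_on_eq_0_if_below_all_small[OF mono_imp_strict_mono[OF mono] _ \<open>0 < x\<close>]) auto
  then have "perp h z = x *\<^sub>R e"
    by simp
  then have "f x \<le> hcomp h z"
    using z \<open>0 < x\<close> unfolding is_join_pair_iff by (simp add: cone_rel_def)
  then have "f x \<le> \<tau> + f q" if "0 < q" "q < x" for q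
    using upper[OF that] f_nonneg_norm[of "(x - q) *\<^sub>R e - perp h z"] by linarith
  then show ?thesis
    using superadditive_on_small_values[OF mono_imp_superadditive[OF mono] \<open>0 < x\<close>, of "f x - \<tau>"]
    by force
qed

lemma mono_imp_lsc: "mono_on {0..} f \<Longrightarrow> lsc_on {0..} f"
  using mono_on_left_closed_imp_lsc_on mono_imp_left_closed by blast

lemma lsc_imp_join_perp_uniformly_continuous:
  assumes lsc: "lsc_on {0..} f" and Z: "\<And>\<tau>. is_join (\<preceq>) {x, y + \<tau> *\<^sub>R h} (Z \<tau>)"
  shows "uniformly_continuous_on UNIV (\<lambda>\<tau>. perp h (Z \<tau>))"
proof (rule uniformly_continuous_on_by_inverse_modulus)
  show "\<exists>\<mu>>0. \<forall>d\<ge>\<epsilon>. \<mu> \<le> f d" if "0 < \<epsilon>" for \<epsilon>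
    using lsc_imp_bounded_away_from_zero[OF lsc that] .
  have modulus: "f (norm (perp h (Z t) - perp h (Z s))) \<le> t - s" if "s \<le> t" for s t
  proof -
    have "is_join (\<preceq>) {x, y + s *\<^sub>R h + (t - s) *\<^sub>R h} (Z t)"
      using Z[of t] by (simp add: algebra_simps)
    then show ?thesis
      using join_pair_raise_perp[OF Z[of s]] that by simp
  qed
  show "f (dist (perp h (Z s)) (perp h (Z t))) \<le> \<bar>s - t\<bar>" for s t
    using modulus[of s t] modulus[of t s] by (cases "s \<le> t") (auto simp: dist_norm norm_minus_commute)
qed

lemma lsc_imp_mono:
  assumes lsc: "lsc_on {0..} f"
  shows "mono_on {0..} f"
proof (rule mono_onI)
  fix a b :: real assume "a \<in> {0..}" "b \<in> {0..}" "a \<le> b"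
  show "f a \<le> f b"
  proof (cases "a = 0")
    case True
    then show ?thesis
      using f_nonneg \<open>b \<in> {0..}\<close> by simp
  next
    case False
    then have "0 < a" "0 < b" "0 < f b"
      using \<open>a \<in> {0..}\<close> \<open>a \<le> b\<close> f_pos by auto
    define Z where "Z \<tau> = (SOME z. is_join (\<preceq>) {0, b *\<^sub>R e + \<tau> *\<^sub>R h} z)" for \<tau>
    have Z: "is_join (\<preceq>) {0, b *\<^sub>R e + \<tau> *\<^sub>R h} (Z \<tau>)" for \<tau>
      unfolding Z_def using exists_join_pair by (rule someI_ex)
    have "continuous_on {- f b..f b} (\<lambda>\<tau>. norm (perp h (Z \<tau>)))"
      using uniformly_continuous_imp_continuous[OF lsc_imp_join_perp_uniformly_continuous[OF lsc Z]]
      by (intro continuous_on_norm) (rule continuous_on_subset, auto)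
    moreover have "Z (- f b) = 0"
      using join_pair_eq_right[of "b *\<^sub>R e + (- f b) *\<^sub>R h" 0] Z[of "- f b"] \<open>0 < b\<close>
      by (simp add: insert_commute cone_rel_def)
    moreover have "Z (f b) = b *\<^sub>R e + f b *\<^sub>R h"
      using join_pair_eq_right[OF _ Z[of "f b"]] \<open>0 < b\<close> by (simp add: cone_rel_def)
    ultimately obtain \<tau> where \<tau>: "\<tau> \<le> f b" "norm (perp h (Z \<tau>)) = a"
      using IVT'[of "\<lambda>\<tau>. norm (perp h (Z \<tau>))" "- f b" a "f b"] \<open>0 < a\<close> \<open>a \<le> b\<close> \<open>0 < f b\<close>
      by fastforce
    have "0 \<preceq> b *\<^sub>R e + f b *\<^sub>R h" "b *\<^sub>R e + \<tau> *\<^sub>R h \<preceq> b *\<^sub>R e + f b *\<^sub>R h"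
      using \<open>0 < b\<close> \<tau>(1) by (auto simp: cone_rel_def)
    then have "Z \<tau> \<preceq> b *\<^sub>R e + f b *\<^sub>R h" "0 \<preceq> Z \<tau>"
      using Z[of \<tau>] unfolding is_join_pair_iff by blast+
    then have "f a + f (norm (b *\<^sub>R e - perp h (Z \<tau>))) \<le> f b"
      using \<tau>(2) by (simp add: cone_rel_def)
    then show ?thesis
      using f_nonneg_norm[of "b *\<^sub>R e - perp h (Z \<tau>)"] by linarith
  qed
qed

end

theorem mainTheorem16:
  fixes h :: "'a::{real_inner, complete_space}"
    and f :: "real \<Rightarrow> real"
  assumes dim2: "dim_at_least 2 TYPE('a)"
    and unit: "norm h = 1"
    and f_nonneg: "\<forall>d\<ge>0. f d \<ge> 0"
    and f_zero: "\<forall>d\<ge>0. f d = 0 \<longleftrightarrow> d = 0"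
    and spg: "sponge (cone_rel f h)"
  shows "(closed {(x, y). cone_rel f h x y} \<longleftrightarrow> lsc_on {0..} f)
       \<and> (lsc_on {0..} f \<longleftrightarrow> mono_on {0..} f)
       \<and> (mono_on {0..} f \<longleftrightarrow> strict_mono_on {0..} f)
       \<and> (strict_mono_on {0..} f \<longleftrightarrow> superadditive_on {0..} f)
       \<and> (dim_at_least 3 TYPE('a) \<longrightarrow>
            closed {(x, y). cone_rel f h x y} \<and> lsc_on {0..} f \<and> mono_on {0..} f
            \<and> strict_mono_on {0..} f \<and> superadditive_on {0..} f)"
proof -
  obtain e where "norm e = 1" "inner e h = 0"
    using exists_unit_orthogonal[OF dim2] by blast
  then interpret cone_sponge_plane h f e
    using unit f_nonneg f_zero spg by unfold_locales
  have closed_iff: "closed {(x, y). cone_rel f h x y} \<longleftrightarrow> lsc_on {0..} f"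
    using closed_cone_rel_iff_closed_epigraph[OF e_unit e_orth] lsc_on_iff_closed_epigraph[of "{0..}" f]
    by simp
  have mono_iff_lsc: "lsc_on {0..} f \<longleftrightarrow> mono_on {0..} f"
    using lsc_imp_mono mono_imp_lsc by blast
  have mono_iff_superadditive: "mono_on {0..} f \<longleftrightarrow> superadditive_on {0..} f"
    using mono_imp_superadditive superadditive_on_imp_strict_mono_on[of f, OF _ f_pos]
      strict_mono_on_imp_mono_on by blast
  have mono_iff_strict_mono: "mono_on {0..} f \<longleftrightarrow> strict_mono_on {0..} f"
    using mono_imp_strict_mono strict_mono_on_imp_mono_on by blast
  have "mono_on {0..} f" if "dim_at_least 3 TYPE('a)"
    using exists_orthonormal_pair_orthogonal[OF that, of h] mono_if_orthonormal_pair by blast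
  then show ?thesis
    using closed_iff mono_iff_lsc mono_iff_superadditive mono_iff_strict_mono by blast
qed

end
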